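(* Fix $k\in\mathbb{Z}_{\geq0}$. For integers $0\leq i\leq r\leq k$, in $\mathcal{A}_k$ we have $$h_{r-i}e_i=\underline{V_i^r}+\underline{V_{i-1}^r}+\underline{U_{i-1}^r}.$$
   Context: Indices are elements of $\mathbb{Z}/(k+1)\mathbb{Z}$, identified with $[0,k]$. $\mathcal{A}_k$ is the associative $\mathbb{Z}$-algebra with generators $A_0,\dots,A_k$ subject only to $A_iA_{i+1}A_i=A_{i+1}A_iA_{i+1}$ for all $i$ and $A_iA_j=A_jA_i$ whenever $i-j\not\equiv\pm1\pmod{k+1}$. A word $A_{i_1\dots i_m}$ is a sequence of indices with value $A_{i_1}\cdots A_{i_m}$, weak length $m$ and support $\{i_1,\dots,i_m\}$. For a proper subset $A\subsetneq[0,k]$ with $|A|=s$, $d_A=A_{i_1\dots i_s}$ and $i_A=A_{i_s\dots i_1}$, where $(i_1,\dots,i_s)$ is any ordering of $A$ such that whenever $i,i+1\in A$, $i+1$ occurs before $i$ (these do not depend on the choice; $d_\emptyset=i_\emptyset=1$). Noncommutative symmetric functions: $h_s=\sum_{A\in\binom{[0,k]}{s}}d_A$ and $e_s=\sum_{A\in\binom{[0,k]}{s}}i_A$. For a proper subset $S$, with $a$ the smallest element of $[0,k]$ not in $S$, $I_S$ is the total order $a+1<\dots<k<0<\dots<a-1$. A word $u=A_{i_1\dots i_m}$ with proper support is a weak hook word of hook type $V$ (resp. $U$) if with respect to $I_{supp(u)}$, for some $j$, $i_1>\dots>i_j<i_{j+1}<\dots<i_m$ (resp. $i_1>\dots>i_j=i_{j+1}<\dots<i_m$);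 $asc(u)$ is the number of $t$ with $i_t<i_{t+1}$. $X^r_i$ ($X\in\{U,V\}$) is the set of weak hook words of hook type $X$, length $r$, and $asc=i$ (empty for $i<0$). For a finite set $S$ of words, $\underline{S}=\sum_{u\in S}u\in\mathcal{A}_k$. *)

theory Defs
  imports Main "HOL-Library.Function_Algebras"
begin

text \<open>Elements of the free associative Z-algebra on generators A_0,...,A_k are
  represented as integer coefficient functions on words (lists of indices);
  the word [i1,...,im] stands for A_{i1}...A_{im}. Only finitely supported
  functions arise below.\<close>

type_synonym elt = "nat list \<Rightarrow> int"

definition word :: "nat list \<Rightarrow> elt" where
  "word u = (\<lambda>w. if w = u then 1 else 0)"

definition amul :: "elt \<Rightarrow> elt \<Rightarrow> elt" where
  "amul f g = (\<lambda>w. \<Sum>j\<in>{0..length w}. f (take j w) * g (drop j w))"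

definition wsum :: "nat list set \<Rightarrow> elt" where
  "wsum S = (\<Sum>u\<in>S. word u)"

definition csuc :: "nat \<Rightarrow> nat \<Rightarrow> nat" where
  "csuc k i = (i + 1) mod (k + 1)"

definition cadj :: "nat \<Rightarrow> nat \<Rightarrow> nat \<Rightarrow> bool" where
  "cadj k i j \<longleftrightarrow> j = csuc k i \<or> i = csuc k j"

definition rels :: "nat \<Rightarrow> (nat list \<times> nat list) set" where
  "rels k = {([i, csuc k i, i], [csuc k i, i, csuc k i]) | i. i \<le> k}
          \<union> {([i, j], [j, i]) | i j. i \<le> k \<and> j \<le> k \<and> \<not> cadj k i j}"

inductive_set rel_ideal :: "nat \<Rightarrow> elt set" for k :: nat where
  zero: "0 \<in> rel_ideal k"
| gen: "(u, v) \<in> rels k \<Longrightarrow> set a \<subseteq> {0..k} \<Longrightarrow> set b \<subseteq> {0..k} \<Longrightarrow>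
        word (a @ u @ b) - word (a @ v @ b) \<in> rel_ideal k"
| add: "f \<in> rel_ideal k \<Longrightarrow> g \<in> rel_ideal k \<Longrightarrow> f + g \<in> rel_ideal k"
| neg: "f \<in> rel_ideal k \<Longrightarrow> - f \<in> rel_ideal k"

definition A_eq :: "nat \<Rightarrow> elt \<Rightarrow> elt \<Rightarrow> bool" where
  "A_eq k x y \<longleftrightarrow> x - y \<in> rel_ideal k"

definition dec_order :: "nat \<Rightarrow> nat set \<Rightarrow> nat list \<Rightarrow> bool" where
  "dec_order k A xs \<longleftrightarrow> distinct xs \<and> set xs = A \<and>
     (\<forall>p < length xs. \<forall>q < length xs. xs ! p = csuc k (xs ! q) \<and> p \<noteq> q \<longrightarrow> p < q)"

definition d_word :: "nat \<Rightarrow> nat set \<Rightarrow> nat list" where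
  "d_word k A = (SOME xs. dec_order k A xs)"

definition h_sym :: "nat \<Rightarrow> nat \<Rightarrow> elt" where
  "h_sym k s = (\<Sum>A\<in>{A. A \<subseteq> {0..k} \<and> card A = s}. word (d_word k A))"

definition e_sym :: "nat \<Rightarrow> nat \<Rightarrow> elt" where
  "e_sym k s = (\<Sum>A\<in>{A. A \<subseteq> {0..k} \<and> card A = s}. word (rev (d_word k A)))"

text \<open>Position of x in the total order I_S: a+1 < ... < k < 0 < ... < a-1,
  a the least element of [0,k] not in S.\<close>
definition I_pos :: "nat \<Rightarrow> nat set \<Rightarrow> nat \<Rightarrow> nat" where
  "I_pos k S x = (let a = Min ({0..k} - S) in (x + (k + 1) - (a + 1)) mod (k + 1))"

definition I_less :: "nat \<Rightarrow> nat set \<Rightarrow> nat \<Rightarrow> nat \<Rightarrow> bool" where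
  "I_less k S x y \<longleftrightarrow> I_pos k S x < I_pos k S y"

text \<open>u = [i_1,...,i_m]; u ! s = i_{s+1}.  Hook type V: for some 1 <= j (j <= m when m >= 1),
  i_1 > ... > i_j < i_{j+1} < ... < i_m w.r.t. I_supp(u).\<close>
definition hookV :: "nat \<Rightarrow> nat list \<Rightarrow> bool" where
  "hookV k u \<longleftrightarrow> set u \<subset> {0..k} \<and>
     (\<exists>j. 1 \<le> j \<and> j \<le> max (length u) 1 \<and>
        (\<forall>s. s + 1 < j \<longrightarrow> I_less k (set u) (u ! (s + 1)) (u ! s)) \<and>
        (\<forall>s. j \<le> s + 1 \<and> s + 1 < length u \<longrightarrow> I_less k (set u) (u ! s) (u ! (s + 1))))"

definition hookU :: "nat \<Rightarrow> nat list \<Rightarrow> bool" where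
  "hookU k u \<longleftrightarrow> set u \<subset> {0..k} \<and>
     (\<exists>j. 1 \<le> j \<and> j + 1 \<le> length u \<and>
        (\<forall>s. s + 1 < j \<longrightarrow> I_less k (set u) (u ! (s + 1)) (u ! s)) \<and>
        u ! (j - 1) = u ! j \<and>
        (\<forall>s. j + 1 \<le> s + 1 \<and> s + 1 < length u \<longrightarrow> I_less k (set u) (u ! s) (u ! (s + 1))))"

definition asc :: "nat \<Rightarrow> nat list \<Rightarrow> nat" where
  "asc k u = card {s. s + 1 < length u \<and> I_less k (set u) (u ! s) (u ! (s + 1))}"

text \<open>X^r_i (empty for i < 0, hence the integer index).\<close>
definition Vset :: "nat \<Rightarrow> nat \<Rightarrow> int \<Rightarrow> nat list set" where
  "Vset k r i = {u. hookV k u \<and> length u = r \<and> int (asc k u) = i}"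

definition Uset :: "nat \<Rightarrow> nat \<Rightarrow> int \<Rightarrow> nat list set" where
  "Uset k r i = {u. hookU k u \<and> length u = r \<and> int (asc k u) = i}"

end

theory Submission
  imports Defs
begin

text \<open>Let \<open>S = A \<union> B\<close> be a proper
  subset. Commuting letters that are not cyclically adjacent turns any admissible ordering of
  \<open>A\<close> into the listing of \<open>A\<close> that decreases with respect to \<open>I\<^sub>S\<close>, and dually \<open>i\<^sub>B\<close> into the
  increasing listing of \<open>B\<close>. Hence \<open>h\<^sub>r\<^sub>-\<^sub>i e\<^sub>i\<close> is the sum of the words
  \<open>desc(A) asc(B)\<close> over all pairs with \<open>|A| = r - i\<close> and \<open>|B| = i\<close>. Cutting such a word after
  \<open>r - i\<close> letters recovers the pair, so the sum runs exactly over the words of length \<open>r\<close>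
  whose first \<open>r - i\<close> letters decrease and whose remaining letters increase. Comparing the
  two letters at the junction sorts these words into V-words with \<open>i\<close> ascents (a rise),
  U-words with \<open>i - 1\<close> ascents (equal letters) and V-words with \<open>i - 1\<close> ascents (a fall);
  the degenerate cases with an empty run are V-words.\<close>

lemma sum_fun_apply: "(\<Sum>a\<in>F. f a) x = (\<Sum>a\<in>F. f a x)"
  by (induction F rule: infinite_finite_induct) auto

lemma amul_sum_left: "amul (\<Sum>a\<in>F. f a) g = (\<Sum>a\<in>F. amul (f a) g)"
  unfolding amul_def by (rule ext) (simp add: sum_fun_apply sum_distrib_right; rule sum.swap)

lemma amul_sum_right: "amul f (\<Sum>a\<in>F. g a) = (\<Sum>a\<in>F. amul f (g a))"
  unfolding amul_def by (rule ext) (simp add: sum_fun_apply sum_distrib_left; rule sum.swap)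

lemma amul_word: "amul (word u) (word v) = word (u @ v)"
proof
  fix w
  have summand: "word u (take j w) * word v (drop j w) = (if j = length u then word (u @ v) w else 0)"
    if "j \<le> length w" for j
  proof -
    have "take j w = u \<and> drop j w = v \<longleftrightarrow> j = length u \<and> w = u @ v"
      using that by auto
    then show ?thesis
      unfolding word_def by (cases "j = length u \<and> w = u @ v") auto
  qed
  have "amul (word u) (word v) w =
      (\<Sum>j\<in>{0..length w}. if j = length u then word (u @ v) w else 0)"
    unfolding amul_def using summand by (intro sum.cong) auto
  also have "\<dots> = word (u @ v) w"
    by (auto simp: word_def)
  finally show "amul (word u) (word v) w = word (u @ v) w" .
qed

lemma A_eq_refl: "A_eq k x x"
  unfolding A_eq_def by (simp add: rel_ideal.zero)

lemma A_eq_sum: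
  assumes "\<And>a. a \<in> F \<Longrightarrow> A_eq k (f a) (g a)"
  shows "A_eq k (\<Sum>a\<in>F. f a) (\<Sum>a\<in>F. g a)"
proof -
  have "(\<Sum>a\<in>F. f a - g a) \<in> rel_ideal k"
    using assms unfolding A_eq_def
    by (induction F rule: infinite_finite_induct) (auto intro: rel_ideal.intros)
  then show ?thesis
    unfolding A_eq_def by (simp add: sum_subtractf)
qed

lemma wsum_Un_disjoint: "finite S \<Longrightarrow> finite T \<Longrightarrow> S \<inter> T = {} \<Longrightarrow> wsum (S \<union> T) = wsum S + wsum T"
  unfolding wsum_def by (rule sum.union_disjoint)

section \<open>Commutation moves\<close>

definition comm_step :: "nat \<Rightarrow> nat list \<Rightarrow> nat list \<Rightarrow> bool" where
  "comm_step k u v \<longleftrightarrow> (\<exists>a b x y. u = a @ [x, y] @ b \<and> v = a @ [y, x] @ b \<and> x \<le> k \<and> y \<le> k \<and>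
      \<not> cadj k x y \<and> set a \<subseteq> {0..k} \<and> set b \<subseteq> {0..k})"

abbreviation comm_steps :: "nat \<Rightarrow> nat list \<Rightarrow> nat list \<Rightarrow> bool" where
  "comm_steps k \<equiv> (comm_step k)\<^sup>*\<^sup>*"

lemma comm_stepI:
  "x \<le> k \<Longrightarrow> y \<le> k \<Longrightarrow> \<not> cadj k x y \<Longrightarrow> set a \<subseteq> {0..k} \<Longrightarrow> set b \<subseteq> {0..k} \<Longrightarrow>
    comm_step k (a @ [x, y] @ b) (a @ [y, x] @ b)"
  unfolding comm_step_def by blast

lemma comm_stepE:
  assumes "comm_step k u v"
  obtains a b x y where "u = a @ [x, y] @ b" "v = a @ [y, x] @ b" "x \<le> k" "y \<le> k"
    "\<not> cadj k x y" "set a \<subseteq> {0..k}" "set b \<subseteq> {0..k}"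
  using assms unfolding comm_step_def by blast

lemma comm_steps_A_eq: "comm_steps k u v \<Longrightarrow> A_eq k (word u) (word v)"
proof (induction rule: rtranclp_induct)
  case base
  show ?case by (rule A_eq_refl)
next
  case (step v w)
  from step.hyps(2) have "word v - word w \<in> rel_ideal k"
  proof (cases rule: comm_stepE)
    case (1 a b x y)
    then have "([x, y], [y, x]) \<in> rels k"
      unfolding rels_def by blast
    with 1 show ?thesis
      using rel_ideal.gen[of "[x, y]" "[y, x]" k a b] by simp
  qed
  with step.IH show ?case
    unfolding A_eq_def using rel_ideal.add by fastforce
qed

lemma rtranclp_map:
  assumes "\<And>x y. R x y \<Longrightarrow> Q (f x) (f y)" "R\<^sup>*\<^sup>* x y"
  shows "Q\<^sup>*\<^sup>* (f x) (f y)"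
  using assms(2) by induction (auto intro: rtranclp.rtrancl_into_rtrancl assms(1))

lemma comm_steps_context:
  assumes "comm_steps k u v" "set c \<subseteq> {0..k}" "set d \<subseteq> {0..k}"
  shows "comm_steps k (c @ u @ d) (c @ v @ d)"
proof (rule rtranclp_map[OF _ assms(1)])
  fix u v assume "comm_step k u v"
  then show "comm_step k (c @ u @ d) (c @ v @ d)"
    by (elim comm_stepE) (use assms(2,3) comm_stepI[of _ k _ "c @ _" "_ @ d"] in auto)
qed

lemma comm_step_set: "comm_step k u v \<Longrightarrow> set u = set v"
  by (elim comm_stepE) auto

lemma comm_steps_set: "comm_steps k u v \<Longrightarrow> set u = set v"
  by (induction rule: rtranclp_induct) (auto dest: comm_step_set)

lemma comm_steps_append:
  assumes "comm_steps k u u'" "comm_steps k v v'" "set u \<subseteq> {0..k}" "set v \<subseteq> {0..k}"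
  shows "comm_steps k (u @ v) (u' @ v')"
proof -
  have "comm_steps k ([] @ u @ v) ([] @ u' @ v)"
    using comm_steps_context[OF assms(1), of "[]" v] assms(4) by simp
  moreover have "comm_steps k (u' @ v @ []) (u' @ v' @ [])"
    using comm_steps_context[OF assms(2), of u' "[]"] assms(3) comm_steps_set[OF assms(1)] by simp
  ultimately show ?thesis by simp
qed

lemma comm_steps_rev:
  assumes "comm_steps k u v"
  shows "comm_steps k (rev u) (rev v)"
proof (rule rtranclp_map[OF _ assms])
  fix u v assume "comm_step k u v"
  then show "comm_step k (rev u) (rev v)"
    by (elim comm_stepE) (use comm_stepI[of _ k _ "rev _" "rev _"] in \<open>auto simp: cadj_def\<close>)
qed

lemma comm_steps_Cons_past:
  assumes "x \<le> k" "\<forall>y\<in>set P. y \<le> k \<and> \<not> cadj k x y" "set Q \<subseteq> {0..k}"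
  shows "comm_steps k (x # P @ Q) (P @ x # Q)"
  using assms(2)
proof (induction P)
  case Nil
  show ?case by simp
next
  case (Cons y P)
  have "comm_step k (x # y # P @ Q) (y # x # P @ Q)"
    using comm_stepI[of x k y "[]" "P @ Q"] Cons.prems assms by fastforce
  moreover have "comm_steps k ([y] @ (x # P @ Q) @ []) ([y] @ (P @ x # Q) @ [])"
    using Cons assms by (intro comm_steps_context) auto
  ultimately show ?case
    by (simp add: converse_rtranclp_into_rtranclp)
qed

section \<open>The order \<open>I\<^sub>S\<close> and sorted listings\<close>

lemma Min_compl:
  fixes k :: nat
  assumes "S \<subset> {0..k}"
  shows "Min ({0..k} - S) \<le> k" "Min ({0..k} - S) \<notin> S"
proof -
  have "{0..k} - S \<noteq> {}"
    using assms by auto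
  then have "Min ({0..k} - S) \<in> {0..k} - S"
    by (intro Min_in) simp_all
  then show "Min ({0..k} - S) \<le> k" "Min ({0..k} - S) \<notin> S"
    by auto
qed

lemma I_pos_eq:
  assumes "S \<subset> {0..k}" "x \<le> k"
  shows "I_pos k S x = (let a = Min ({0..k} - S) in if a < x then x - a - 1 else x + k - a)"
proof -
  define a where "a = Min ({0..k} - S)"
  have "a \<le> k"
    using Min_compl(1)[OF assms(1)] unfolding a_def .
  have "(x + (k + 1) - (a + 1)) mod (k + 1) = (if a < x then x - a - 1 else x + k - a)"
  proof (cases "a < x")
    case True
    then have "x + (k + 1) - (a + 1) = (x - a - 1) + (k + 1)"
      by simp
    then show ?thesis
      using True assms(2) by (simp only: mod_add_self2) simp
  next
    case False
    then show ?thesis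
      using \<open>a \<le> k\<close> by simp
  qed
  then show ?thesis
    unfolding I_pos_def a_def[symmetric] Let_def .
qed

lemma inj_on_I_pos:
  assumes "S \<subset> {0..k}"
  shows "inj_on (I_pos k S) {0..k}"
  using Min_compl(1)[OF assms]
  by (intro inj_onI) (auto simp: I_pos_eq[OF assms] Let_def split: if_splits)

text \<open>The order \<open>I\<^sub>S\<close> cuts the cycle \<open>0, ..., k\<close> at a point outside \<open>S\<close>, so the
  cyclic successor of a letter of \<open>S\<close> is its successor in \<open>I\<^sub>S\<close>.\<close>

lemma I_pos_csuc:
  assumes "S \<subset> {0..k}" "y \<in> S"
  shows "I_pos k S (csuc k y) = Suc (I_pos k S y)"
proof -
  have "y \<le> k" "csuc k y \<le> k" "y \<noteq> Min ({0..k} - S)"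
    using assms Min_compl(2)[OF assms(1)] by (auto simp: csuc_def)
  moreover have "csuc k y = (if y = k then 0 else y + 1)"
    using \<open>y \<le> k\<close> by (simp add: csuc_def)
  ultimately show ?thesis
    using Min_compl(1)[OF assms(1)] by (auto simp: I_pos_eq[OF assms(1)] Let_def)
qed

abbreviation (input) I_greater :: "nat \<Rightarrow> nat set \<Rightarrow> nat \<Rightarrow> nat \<Rightarrow> bool" where
  "I_greater k S x y \<equiv> I_less k S y x"

lemma I_less_irrefl: "\<not> I_less k S x x"
  unfolding I_less_def by simp

lemma transp_I_less: "transp (I_less k S)"
  unfolding I_less_def by (rule transpI) simp

lemma transp_I_greater: "transp (I_greater k S)"
  unfolding I_less_def by (rule transpI) simp

lemma I_less_linear:
  "S \<subset> {0..k} \<Longrightarrow> x \<le> k \<Longrightarrow> y \<le> k \<Longrightarrow> I_less k S x y \<or> x = y \<or> I_less k S y x"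
  unfolding I_less_def using inj_on_I_pos by (metis atLeastAtMost_iff inj_onD le0 linorder_neqE_nat)

lemma I_less_csuc: "S \<subset> {0..k} \<Longrightarrow> y \<in> S \<Longrightarrow> I_less k S y (csuc k y)"
  unfolding I_less_def by (simp add: I_pos_csuc)

definition asc_word :: "nat \<Rightarrow> nat set \<Rightarrow> nat set \<Rightarrow> nat list" where
  "asc_word k S A = sort_key (I_pos k S) (sorted_list_of_set A)"

definition desc_word :: "nat \<Rightarrow> nat set \<Rightarrow> nat set \<Rightarrow> nat list" where
  "desc_word k S A = rev (asc_word k S A)"

lemma finite_subset_atLeastAtMost: "A \<subseteq> {0..(k::nat)} \<Longrightarrow> finite A"
  using finite_subset by blast

lemma set_asc_word: "finite A \<Longrightarrow> set (asc_word k S A) = A"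
  unfolding asc_word_def by simp

lemma length_asc_word: "finite A \<Longrightarrow> length (asc_word k S A) = card A"
  unfolding asc_word_def by simp

lemma distinct_asc_word: "finite A \<Longrightarrow> distinct (asc_word k S A)"
  unfolding asc_word_def by simp

lemma set_desc_word: "finite A \<Longrightarrow> set (desc_word k S A) = A"
  unfolding desc_word_def by (simp add: set_asc_word)

lemma length_desc_word: "finite A \<Longrightarrow> length (desc_word k S A) = card A"
  unfolding desc_word_def by (simp add: length_asc_word)

lemma sorted_wrt_I_less_iff: "sorted_wrt (I_less k S) xs \<longleftrightarrow> sorted_wrt (<) (map (I_pos k S) xs)"
  unfolding I_less_def sorted_wrt_map ..

lemma sorted_asc_word:
  assumes "A \<subseteq> S" "S \<subset> {0..k}"
  shows "sorted_wrt (I_less k S) (asc_word k S A)"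
proof -
  have "A \<subseteq> {0..k}"
    using assms by auto
  then have "finite A" "inj_on (I_pos k S) A"
    using assms(2) inj_on_subset[OF inj_on_I_pos] finite_subset_atLeastAtMost by auto
  then show ?thesis
    unfolding sorted_wrt_I_less_iff strict_sorted_iff
    by (auto simp: asc_word_def distinct_map)
qed

lemma sorted_desc_word: "A \<subseteq> S \<Longrightarrow> S \<subset> {0..k} \<Longrightarrow> sorted_wrt (I_greater k S) (desc_word k S A)"
  unfolding desc_word_def sorted_wrt_rev by (rule sorted_asc_word)

lemma asc_word_unique:
  assumes "sorted_wrt (I_less k S) xs" "set xs = A" "A \<subseteq> S" "S \<subset> {0..k}"
  shows "xs = asc_word k S A"
proof -
  have "A \<subseteq> {0..k}"
    using assms(3,4) by auto
  then have A: "finite A" "set (asc_word k S A) = A"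
    using finite_subset_atLeastAtMost set_asc_word by auto
  have "map (I_pos k S) (asc_word k S A) = map (I_pos k S) xs"
    using assms sorted_asc_word[OF assms(3,4)] A
    by (intro strict_sorted_equal) (auto simp: sorted_wrt_I_less_iff)
  moreover have "inj_on (I_pos k S) (set xs \<union> set (asc_word k S A))"
    using assms A inj_on_subset[OF inj_on_I_pos] by auto
  ultimately show ?thesis
    using inj_on_map_eq_map by metis
qed

lemma desc_word_unique:
  assumes "sorted_wrt (I_greater k S) xs" "set xs = A" "A \<subseteq> S" "S \<subset> {0..k}"
  shows "xs = desc_word k S A"
  using asc_word_unique[of k S "rev xs" A] assms unfolding desc_word_def sorted_wrt_rev by (simp add: rev_swap)

section \<open>Admissible orderings up to commutation\<close>

lemma sorted_wrt_insert_takeWhile: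
  assumes "transp R" "sorted_wrt R xs" "\<And>y. y \<in> set xs \<Longrightarrow> R x y \<or> R y x"
  shows "sorted_wrt R (takeWhile (\<lambda>y. R y x) xs @ x # dropWhile (\<lambda>y. R y x) xs)"
  using assms(2,3)
proof (induction xs)
  case Nil
  show ?case by simp
next
  case (Cons y ys)
  show ?case
  proof (cases "R y x")
    case True
    have "R y z" if "z \<in> set (takeWhile (\<lambda>y. R y x) ys @ x # dropWhile (\<lambda>y. R y x) ys)" for z
      using that True Cons.prems(1) by (auto dest: set_takeWhileD set_dropWhileD)
    with True Cons show ?thesis by auto
  next
    case False
    with Cons.prems(2) have "R x y" by auto
    with Cons.prems(1) have "R x z" if "z \<in> set (y # ys)" for z
      using that transpD[OF assms(1)] by auto
    with False Cons.prems(1) show ?thesis by auto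
  qed
qed

lemma dec_order_Cons:
  assumes "dec_order k A (x # xs)"
  shows "dec_order k (set xs) xs" "csuc k x \<notin> set xs"
proof -
  have before: "p < q" if "p < length (x # xs)" "q < length (x # xs)"
    "(x # xs) ! p = csuc k ((x # xs) ! q)" "p \<noteq> q" for p q
    using assms that unfolding dec_order_def by blast
  show "csuc k x \<notin> set xs"
  proof
    assume "csuc k x \<in> set xs"
    then obtain m where "m < length xs" "xs ! m = csuc k x"
      by (auto simp: in_set_conv_nth)
    then show False
      using before[of "Suc m" 0] by simp
  qed
  have "p < q" if "p < length xs" "q < length xs" "xs ! p = csuc k (xs ! q)" "p \<noteq> q" for p q
    using before[of "Suc p" "Suc q"] that by simp
  moreover have "distinct xs"
    using assms unfolding dec_order_def by simp
  ultimately show "dec_order k (set xs) xs"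
    unfolding dec_order_def by blast
qed

lemma not_cadj_if_dec_order_Cons:
  assumes "dec_order k A (x # xs)" "A \<subseteq> S" "S \<subset> {0..k}" "y \<in> set xs" "I_less k S x y"
  shows "\<not> cadj k x y"
proof -
  have "y \<noteq> csuc k x"
    using dec_order_Cons(2)[OF assms(1)] assms(4) by auto
  moreover have "x \<noteq> csuc k y"
  proof
    assume "x = csuc k y"
    moreover have "y \<in> S"
      using assms(1,2,4) unfolding dec_order_def by auto
    ultimately have "I_less k S y x"
      using I_less_csuc[OF assms(3)] by simp
    with assms(5) show False
      by (simp add: I_less_def)
  qed
  ultimately show ?thesis
    unfolding cadj_def by auto
qed

lemma desc_word_insert:
  assumes "finite A" "x \<notin> A" "insert x A \<subseteq> S" "S \<subset> {0..k}"
  shows "desc_word k S (insert x A) =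
    takeWhile (\<lambda>y. I_less k S x y) (desc_word k S A) @ x # dropWhile (\<lambda>y. I_less k S x y) (desc_word k S A)"
proof (rule desc_word_unique[symmetric])
  let ?D = "desc_word k S A"
  have "I_less k S x y \<or> I_less k S y x" if "y \<in> set ?D" for y
  proof -
    have "y \<in> A" "x \<noteq> y" "x \<le> k" "y \<le> k"
      using that assms set_desc_word[OF assms(1)] by auto
    then show ?thesis
      using I_less_linear[OF assms(4), of x y] by auto
  qed
  moreover have "sorted_wrt (\<lambda>x y. I_less k S y x) ?D"
    using assms(3,4) by (intro sorted_desc_word) auto
  ultimately show "sorted_wrt (\<lambda>x y. I_less k S y x)
      (takeWhile (\<lambda>y. I_less k S x y) ?D @ x # dropWhile (\<lambda>y. I_less k S x y) ?D)"
    using sorted_wrt_insert_takeWhile[OF transp_I_greater] by blast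
  have "set (takeWhile (\<lambda>y. I_less k S x y) ?D) \<union> set (dropWhile (\<lambda>y. I_less k S x y) ?D) = A"
    using set_desc_word[OF assms(1)] by (metis set_append takeWhile_dropWhile_id)
  then show "set (takeWhile (\<lambda>y. I_less k S x y) ?D @ x # dropWhile (\<lambda>y. I_less k S x y) ?D) =
      insert x A"
    by auto
qed (use assms in auto)

text \<open>Insertion sort by commutations: the admissibility of the ordering guarantees that the
  head letter is never adjacent (cyclically) to the letters it has to pass.\<close>

lemma comm_steps_desc_word:
  assumes "dec_order k A xs" "A \<subseteq> S" "S \<subset> {0..k}"
  shows "comm_steps k xs (desc_word k S A)"
  using assms(1,2)
proof (induction xs arbitrary: A)
  case Nil
  then show ?case
    by (simp add: dec_order_def desc_word_def asc_word_def)
next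
  case (Cons x xs)
  have A: "A = insert x (set xs)" "x \<notin> set xs"
    using Cons.prems(1) unfolding dec_order_def by auto
  have S: "S \<subseteq> {0..k}" "x \<in> S" "set xs \<subseteq> S"
    using assms(3) A Cons.prems(2) by auto
  define D where "D = desc_word k S (set xs)"
  define P where "P = takeWhile (\<lambda>y. I_less k S x y) D"
  define Q where "Q = dropWhile (\<lambda>y. I_less k S x y) D"
  have D: "set D = set xs" "D = P @ Q"
    unfolding D_def P_def Q_def by (simp_all add: set_desc_word)
  have "comm_steps k xs D"
    using Cons.IH dec_order_Cons(1)[OF Cons.prems(1)] S(3) unfolding D_def by blast
  then have "comm_steps k (x # xs) (x # P @ Q)"
    using comm_steps_context[of k xs D "[x]" "[]"] S D by auto
  also have "comm_steps k (x # P @ Q) (P @ x # Q)"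
  proof (rule comm_steps_Cons_past)
    show "\<forall>y\<in>set P. y \<le> k \<and> \<not> cadj k x y"
    proof
      fix y assume "y \<in> set P"
      then have "y \<in> set xs" "I_less k S x y"
        using D(1) unfolding P_def by (auto dest: set_takeWhileD)
      then show "y \<le> k \<and> \<not> cadj k x y"
        using not_cadj_if_dec_order_Cons[OF Cons.prems assms(3)] S by auto
    qed
    show "x \<le> k" "set Q \<subseteq> {0..k}"
      using S D by auto
  qed
  also have "P @ x # Q = desc_word k S A"
    unfolding P_def Q_def D_def A(1) using desc_word_insert[of "set xs" x S k] A(2) S assms(3) by simp
  finally show ?case .
qed

text \<open>Since \<open>d_word\<close> is defined by choice, we need that an admissible ordering exists.\<close>

lemma dec_order_desc_word:
  assumes "A \<subset> {0..k}"
  shows "dec_order k A (desc_word k A A)"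
proof -
  let ?xs = "desc_word k A A"
  have "finite A"
    using assms finite_subset_atLeastAtMost by blast
  have sorted: "sorted_wrt (\<lambda>x y. I_less k A y x) ?xs"
    using sorted_desc_word[OF _ assms] by simp
  have "p < q" if "p < length ?xs" "q < length ?xs" "?xs ! p = csuc k (?xs ! q)" "p \<noteq> q" for p q
  proof (rule ccontr)
    assume "\<not> p < q"
    then have "I_less k A (?xs ! p) (?xs ! q)"
      using sorted that(1,4) unfolding sorted_wrt_iff_nth_less by auto
    moreover have "?xs ! q \<in> A"
      using that(2) set_desc_word[OF \<open>finite A\<close>] nth_mem by blast
    with that(3) have "I_less k A (?xs ! q) (?xs ! p)"
      using I_less_csuc[OF assms] by simp
    ultimately show False
      by (simp add: I_less_def)
  qed
  then show ?thesis
    unfolding dec_order_def desc_word_def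
    using \<open>finite A\<close> by (simp add: distinct_asc_word set_asc_word)
qed

lemma d_word_dec_order: "A \<subset> {0..k} \<Longrightarrow> dec_order k A (d_word k A)"
  unfolding d_word_def by (rule someI) (rule dec_order_desc_word)

lemma set_d_word: "A \<subset> {0..k} \<Longrightarrow> set (d_word k A) = A"
  using d_word_dec_order unfolding dec_order_def by blast

lemma comm_steps_d_word: "A \<subseteq> S \<Longrightarrow> S \<subset> {0..k} \<Longrightarrow> comm_steps k (d_word k A) (desc_word k S A)"
  by (rule comm_steps_desc_word[OF d_word_dec_order]) auto

lemma comm_steps_rev_d_word: "A \<subseteq> S \<Longrightarrow> S \<subset> {0..k} \<Longrightarrow> comm_steps k (rev (d_word k A)) (asc_word k S A)"
  using comm_steps_rev[OF comm_steps_d_word] unfolding desc_word_def by simp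

section \<open>Hook words\<close>

text \<open>Letters are numbered from 1, as in the hook conditions: \<open>descends_upto k u j\<close> says that
  letters 1..j of u decrease and \<open>ascends_from k u j\<close> that letters j, j+1, ... increase.\<close>

definition descends_upto :: "nat \<Rightarrow> nat list \<Rightarrow> nat \<Rightarrow> bool" where
  "descends_upto k u j \<longleftrightarrow> (\<forall>s. s + 1 < j \<longrightarrow> I_less k (set u) (u ! (s + 1)) (u ! s))"

definition ascends_from :: "nat \<Rightarrow> nat list \<Rightarrow> nat \<Rightarrow> bool" where
  "ascends_from k u j \<longleftrightarrow>
     (\<forall>s. j \<le> s + 1 \<and> s + 1 < length u \<longrightarrow> I_less k (set u) (u ! s) (u ! (s + 1)))"

lemma descends_upto_mono: "descends_upto k u j \<Longrightarrow> j' \<le> j \<Longrightarrow> descends_upto k u j'"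
  unfolding descends_upto_def by auto

lemma ascends_from_mono: "ascends_from k u j \<Longrightarrow> j \<le> j' \<Longrightarrow> ascends_from k u j'"
  unfolding ascends_from_def by auto

lemma hookV_iff: "hookV k u \<longleftrightarrow> set u \<subset> {0..k} \<and>
    (\<exists>j. 1 \<le> j \<and> j \<le> max (length u) 1 \<and> descends_upto k u j \<and> ascends_from k u j)"
  unfolding hookV_def descends_upto_def ascends_from_def by blast

lemma hookU_iff: "hookU k u \<longleftrightarrow> set u \<subset> {0..k} \<and>
    (\<exists>j. 1 \<le> j \<and> j + 1 \<le> length u \<and> descends_upto k u j \<and> u ! (j - 1) = u ! j \<and>
       ascends_from k u (j + 1))"
  unfolding hookU_def descends_upto_def ascends_from_def by auto

lemma asc_hookV:
  assumes "1 \<le> j" "descends_upto k u j" "ascends_from k u j"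
  shows "asc k u = length u - j"
proof -
  have "{s. s + 1 < length u \<and> I_less k (set u) (u ! s) (u ! (s + 1))} = {j - 1..<length u - 1}"
  proof (intro set_eqI iffI)
    fix s assume s: "s \<in> {s. s + 1 < length u \<and> I_less k (set u) (u ! s) (u ! (s + 1))}"
    have "\<not> s + 1 < j"
      using s assms(2) unfolding descends_upto_def by (auto simp: I_less_def)
    with s show "s \<in> {j - 1..<length u - 1}" by auto
  next
    fix s assume "s \<in> {j - 1..<length u - 1}"
    then have "j \<le> s + 1 \<and> s + 1 < length u"
      using assms(1) by auto
    then show "s \<in> {s. s + 1 < length u \<and> I_less k (set u) (u ! s) (u ! (s + 1))}"
      using assms(3) unfolding ascends_from_def by auto
  qed
  then show ?thesis
    unfolding asc_def using assms(1) by simp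
qed

lemma asc_hookU:
  assumes "1 \<le> j" "descends_upto k u j" "u ! (j - 1) = u ! j" "ascends_from k u (j + 1)"
  shows "asc k u = length u - j - 1"
proof -
  have "{s. s + 1 < length u \<and> I_less k (set u) (u ! s) (u ! (s + 1))} = {j..<length u - 1}"
  proof (intro set_eqI iffI)
    fix s assume s: "s \<in> {s. s + 1 < length u \<and> I_less k (set u) (u ! s) (u ! (s + 1))}"
    have "\<not> s + 1 < j"
      using s assms(2) unfolding descends_upto_def by (auto simp: I_less_def)
    moreover have "s \<noteq> j - 1"
      using s assms(1,3) I_less_irrefl by force
    ultimately show "s \<in> {j..<length u - 1}"
      using s by auto
  next
    fix s assume "s \<in> {j..<length u - 1}"
    then show "s \<in> {s. s + 1 < length u \<and> I_less k (set u) (u ! s) (u ! (s + 1))}"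
      using assms(4) unfolding ascends_from_def by auto
  qed
  then show ?thesis
    unfolding asc_def by simp
qed

lemma not_hookV_and_hookU: "\<not> (hookV k u \<and> hookU k u)"
proof
  assume "hookV k u \<and> hookU k u"
  then obtain j j' where j: "1 \<le> j" "descends_upto k u j" "ascends_from k u j"
    and j': "1 \<le> j'" "j' + 1 \<le> length u" "u ! (j' - 1) = u ! j'"
    unfolding hookV_iff hookU_iff by blast
  show False
  proof (cases "j' < j")
    case True
    with j'(1) have "j' - 1 + 1 < j"
      by simp
    then have "I_less k (set u) (u ! (j' - 1 + 1)) (u ! (j' - 1))"
      using j(2) unfolding descends_upto_def by blast
    with j'(1,3) show False
      by (simp add: I_less_def)
  next
    case False
    with j'(1,2) have "j \<le> j' - 1 + 1 \<and> j' - 1 + 1 < length u"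
      by simp
    then have "I_less k (set u) (u ! (j' - 1)) (u ! (j' - 1 + 1))"
      using j(3) unfolding ascends_from_def by blast
    with j'(1,3) show False
      by (simp add: I_less_def)
  qed
qed

lemma hookV_intro:
  assumes "set u \<subset> {0..k}" "1 \<le> j" "j \<le> max (length u) 1" "descends_upto k u j" "ascends_from k u j"
  shows "u \<in> Vset k (length u) (int (length u - j))"
proof -
  have "hookV k u"
    unfolding hookV_iff using assms by blast
  then show ?thesis
    unfolding Vset_def using asc_hookV[OF assms(2,4,5)] by simp
qed

lemma hookU_intro:
  assumes "set u \<subset> {0..k}" "1 \<le> j" "j + 1 \<le> length u" "descends_upto k u j" "u ! (j - 1) = u ! j"
    "ascends_from k u (j + 1)"
  shows "u \<in> Uset k (length u) (int (length u - j - 1))"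
proof -
  have "hookU k u"
    unfolding hookU_iff using assms by blast
  then show ?thesis
    unfolding Uset_def using asc_hookU[OF assms(2,4,5,6)] by simp
qed

lemma descends_upto_Suc:
  assumes "descends_upto k u j" "I_less k (set u) (u ! j) (u ! (j - 1))"
  shows "descends_upto k u (j + 1)"
  unfolding descends_upto_def
proof (intro allI impI)
  fix s assume "s + 1 < j + 1"
  show "I_less k (set u) (u ! (s + 1)) (u ! s)"
  proof (cases "s + 1 < j")
    case True
    then show ?thesis
      using assms(1) unfolding descends_upto_def by blast
  next
    case False
    with \<open>s + 1 < j + 1\<close> have "s + 1 = j" "j - 1 = s"
      by simp_all
    then show ?thesis
      using assms(2) by simp
  qed
qed

lemma ascends_from_pred:
  assumes "ascends_from k u (j + 1)" "j < length u \<Longrightarrow> I_less k (set u) (u ! (j - 1)) (u ! j)"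
  shows "ascends_from k u j"
  unfolding ascends_from_def
proof (intro allI impI)
  fix s assume s: "j \<le> s + 1 \<and> s + 1 < length u"
  show "I_less k (set u) (u ! s) (u ! (s + 1))"
  proof (cases "j + 1 \<le> s + 1")
    case True
    then show ?thesis
      using assms(1) s unfolding ascends_from_def by blast
  next
    case False
    with s have "s + 1 = j" "j - 1 = s" "j < length u"
      by arith+
    then show ?thesis
      using assms(2) by simp
  qed
qed

definition desc_asc_at :: "nat \<Rightarrow> nat \<Rightarrow> nat list \<Rightarrow> bool" where
  "desc_asc_at k p u \<longleftrightarrow> set u \<subset> {0..k} \<and> descends_upto k u p \<and> ascends_from k u (p + 1)"

text \<open>The hook type and the number of ascents are read off at the junction of the two runs.\<close>

lemma hook_sets_if_desc_asc_at_junction: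
  assumes "desc_asc_at k p u" "0 < p" "p < length u"
  shows "u \<in> Vset k (length u) (int (length u - p)) \<union> Vset k (length u) (int (length u - p) - 1) \<union>
    Uset k (length u) (int (length u - p) - 1)"
proof -
  have u: "set u \<subset> {0..k}" "descends_upto k u p" "ascends_from k u (p + 1)"
    using assms(1) unfolding desc_asc_at_def by auto
  have "u ! (p - 1) \<in> set u" "u ! p \<in> set u"
    using assms(3) by auto
  then have "u ! (p - 1) \<le> k" "u ! p \<le> k"
    using u(1) by auto
  then consider (rise) "I_less k (set u) (u ! (p - 1)) (u ! p)" | (tie) "u ! (p - 1) = u ! p"
    | (fall) "I_less k (set u) (u ! p) (u ! (p - 1))"
    using I_less_linear[OF u(1)] by blast
  then show ?thesis
  proof cases
    case rise
    have "ascends_from k u p"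
      using ascends_from_pred[OF u(3)] rise by simp
    then have "u \<in> Vset k (length u) (int (length u - p))"
      using hookV_intro[OF u(1), of p] u(2) assms(2,3) by simp
    then show ?thesis
      by simp
  next
    case tie
    have "u \<in> Uset k (length u) (int (length u - p - 1))"
      using hookU_intro[OF u(1), of p] u(2,3) tie assms(2,3) by simp
    moreover have "int (length u - p) - 1 = int (length u - p - 1)"
      using assms(3) by simp
    ultimately show ?thesis
      by (simp only: Un_iff) blast
  next
    case fall
    have "descends_upto k u (p + 1)"
      using descends_upto_Suc[OF u(2)] fall by simp
    then have "u \<in> Vset k (length u) (int (length u - (p + 1)))"
      using hookV_intro[OF u(1), of "p + 1"] u(3) assms(2,3) by (simp add: ascends_from_mono)
    moreover have "int (length u - p) - 1 = int (length u - (p + 1))"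
      using assms(3) by simp
    ultimately show ?thesis
      by (simp only: Un_iff) blast
  qed
qed

lemma hook_sets_if_desc_asc_at:
  assumes "desc_asc_at k (r - i) u" "length u = r" "i \<le> r"
  shows "u \<in> Vset k r (int i) \<union> Vset k r (int i - 1) \<union> Uset k r (int i - 1)"
proof -
  define p where "p = r - i"
  have u: "set u \<subset> {0..k}" "descends_upto k u p" "ascends_from k u (p + 1)"
    using assms(1) unfolding desc_asc_at_def p_def by auto
  consider (no_desc) "p = 0" | (no_asc) "0 < p" "i = 0" | (junction) "0 < p" "p < r"
    using p_def assms(3) by linarith
  then show ?thesis
  proof cases
    case no_desc
    have "descends_upto k u 1"
      unfolding descends_upto_def by simp
    then have "u \<in> Vset k r (int (r - 1))"
      using hookV_intro[OF u(1), of 1] u(3) no_desc assms(2) by simp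
    then show ?thesis
      using no_desc p_def assms(3) by (cases "r = 0") auto
  next
    case no_asc
    have "ascends_from k u p"
      unfolding ascends_from_def using no_asc p_def assms(2) by auto
    then have "u \<in> Vset k r (int (r - p))"
      using hookV_intro[OF u(1), of p] u(2) no_asc assms(2) p_def by simp
    then show ?thesis
      using no_asc p_def by simp
  next
    case junction
    then show ?thesis
      using hook_sets_if_desc_asc_at_junction[of k p u] assms p_def by simp
  qed
qed

lemma desc_asc_at_if_hookV:
  assumes "hookV k u"
  shows "desc_asc_at k (length u - asc k u) u" "desc_asc_at k (length u - asc k u - 1) u"
proof -
  obtain j where j: "set u \<subset> {0..k}" "1 \<le> j" "j \<le> max (length u) 1"
    "descends_upto k u j" "ascends_from k u j"
    using assms unfolding hookV_iff by blast
  have asc: "asc k u = length u - j"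
    by (rule asc_hookV[OF j(2,4,5)])
  have "length u - asc k u - 1 = j - 1"
    using asc j(2,3) by (cases "u = []") auto
  moreover have "desc_asc_at k (j - 1) u"
    unfolding desc_asc_at_def using j descends_upto_mono[OF j(4)] by simp
  ultimately show "desc_asc_at k (length u - asc k u - 1) u"
    by simp
  show "desc_asc_at k (length u - asc k u) u"
  proof (cases "u = []")
    case True
    then show ?thesis
      using j(1) unfolding desc_asc_at_def descends_upto_def ascends_from_def by simp
  next
    case False
    then have "j \<le> length u"
      using j(3) by (cases u) auto
    then have "length u - asc k u = j"
      using asc by simp
    moreover have "desc_asc_at k j u"
      unfolding desc_asc_at_def using j ascends_from_mono[OF j(5)] by simp
    ultimately show ?thesis
      by simp
  qed
qed

lemma desc_asc_at_if_hookU: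
  assumes "hookU k u"
  shows "desc_asc_at k (length u - asc k u - 1) u"
proof -
  obtain j where j: "set u \<subset> {0..k}" "1 \<le> j" "j + 1 \<le> length u"
    "descends_upto k u j" "u ! (j - 1) = u ! j" "ascends_from k u (j + 1)"
    using assms unfolding hookU_iff by blast
  have "length u - asc k u - 1 = j"
    using asc_hookU[OF j(2,4,5,6)] j(3) by simp
  then show ?thesis
    unfolding desc_asc_at_def using j by simp
qed

lemma hook_sets_eq_desc_asc_at:
  assumes "i \<le> r"
  shows "Vset k r (int i) \<union> Vset k r (int i - 1) \<union> Uset k r (int i - 1) =
    {u. length u = r \<and> desc_asc_at k (r - i) u}"
proof (intro equalityI subsetI)
  fix u assume "u \<in> Vset k r (int i) \<union> Vset k r (int i - 1) \<union> Uset k r (int i - 1)"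
  then consider (V) "hookV k u" "length u = r" "asc k u = i"
    | (V') "hookV k u" "length u = r" "asc k u + 1 = i"
    | (U) "hookU k u" "length u = r" "asc k u + 1 = i"
    unfolding Vset_def Uset_def by (auto; linarith)
  then show "u \<in> {u. length u = r \<and> desc_asc_at k (r - i) u}"
  proof cases
    case V
    then show ?thesis
      using desc_asc_at_if_hookV(1)[of k u] by simp
  next
    case V'
    then have "r - i = length u - asc k u - 1"
      by simp
    with V' show ?thesis
      using desc_asc_at_if_hookV(2)[of k u] by simp
  next
    case U
    then have "r - i = length u - asc k u - 1"
      by simp
    with U show ?thesis
      using desc_asc_at_if_hookU[of k u] by simp
  qed
qed (use hook_sets_if_desc_asc_at assms in blast)

section \<open>Descending-ascending words and pairs of subsets\<close>

lemma descends_upto_iff_sorted: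
  assumes "j \<le> length u"
  shows "descends_upto k u j \<longleftrightarrow> sorted_wrt (\<lambda>x y. I_less k (set u) y x) (take j u)"
  using assms unfolding descends_upto_def sorted_wrt_iff_nth_Suc_transp[OF transp_I_greater]
  by (auto simp: nth_take)

lemma ascends_from_Suc_iff_sorted:
  "ascends_from k u (j + 1) \<longleftrightarrow> sorted_wrt (I_less k (set u)) (drop j u)"
proof -
  have "ascends_from k u (j + 1) \<longleftrightarrow>
      (\<forall>t. Suc t < length u - j \<longrightarrow> I_less k (set u) (u ! (j + t)) (u ! (j + t + 1)))"
    unfolding ascends_from_def
  proof (intro iffI allI impI)
    fix t assume all: "\<forall>s. j + 1 \<le> s + 1 \<and> s + 1 < length u \<longrightarrow> I_less k (set u) (u ! s) (u ! (s + 1))"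
      and "Suc t < length u - j"
    then show "I_less k (set u) (u ! (j + t)) (u ! (j + t + 1))"
      using all[rule_format, of "j + t"] by simp
  next
    fix s assume all: "\<forall>t. Suc t < length u - j \<longrightarrow> I_less k (set u) (u ! (j + t)) (u ! (j + t + 1))"
      and "j + 1 \<le> s + 1 \<and> s + 1 < length u"
    then have "Suc (s - j) < length u - j" "j + (s - j) = s"
      by auto
    then show "I_less k (set u) (u ! s) (u ! (s + 1))"
      using all[rule_format, of "s - j"] by simp
  qed
  also have "\<dots> \<longleftrightarrow> sorted_wrt (I_less k (set u)) (drop j u)"
    unfolding sorted_wrt_iff_nth_Suc_transp[OF transp_I_less] by simp
  finally show ?thesis .
qed

lemma desc_asc_at_iff_sorted:
  assumes "p \<le> length u"
  shows "desc_asc_at k p u \<longleftrightarrow> set u \<subset> {0..k} \<and>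
    sorted_wrt (\<lambda>x y. I_less k (set u) y x) (take p u) \<and> sorted_wrt (I_less k (set u)) (drop p u)"
  unfolding desc_asc_at_def descends_upto_iff_sorted[OF assms] ascends_from_Suc_iff_sorted ..

definition card_subsets :: "nat \<Rightarrow> nat \<Rightarrow> nat set set" where
  "card_subsets k s = {A. A \<subseteq> {0..k} \<and> card A = s}"

lemma Un_psubset_if_card_le:
  fixes k :: nat
  assumes "A \<subseteq> {0..k}" "B \<subseteq> {0..k}" "card A + card B \<le> k"
  shows "A \<union> B \<subset> {0..k}"
proof -
  have "card (A \<union> B) < card {0..k}"
    using card_Un_le[of A B] assms(3) by simp
  then show ?thesis
    using assms(1,2) by auto
qed

fun desc_asc_word :: "nat \<Rightarrow> nat set \<times> nat set \<Rightarrow> nat list" where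
  "desc_asc_word k (A, B) = desc_word k (A \<union> B) A @ asc_word k (A \<union> B) B"

lemma desc_asc_at_desc_asc_word:
  assumes "A \<subseteq> {0..k}" "B \<subseteq> {0..k}" "card A + card B \<le> k"
  shows "length (desc_asc_word k (A, B)) = card A + card B"
    "desc_asc_at k (card A) (desc_asc_word k (A, B))"
proof -
  let ?S = "A \<union> B"
  have S: "?S \<subset> {0..k}"
    using Un_psubset_if_card_le[OF assms] .
  have "finite A" "finite B"
    using assms(1,2) finite_subset_atLeastAtMost by auto
  then have D: "set (desc_word k ?S A) = A" "length (desc_word k ?S A) = card A"
    and C: "set (asc_word k ?S B) = B" "length (asc_word k ?S B) = card B"
    by (simp_all add: set_desc_word length_desc_word set_asc_word length_asc_word)
  show "length (desc_asc_word k (A, B)) = card A + card B"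
    using D C by simp
  have "set (desc_asc_word k (A, B)) = ?S"
    using D C by simp
  then show "desc_asc_at k (card A) (desc_asc_word k (A, B))"
    using desc_asc_at_iff_sorted D C S sorted_desc_word[OF _ S] sorted_asc_word[OF _ S] by simp
qed

lemma distinct_if_sorted_I_less: "sorted_wrt (I_less k S) xs \<Longrightarrow> distinct xs"
  unfolding sorted_wrt_I_less_iff strict_sorted_iff by (simp add: distinct_map)

lemma desc_asc_word_take_drop:
  assumes "desc_asc_at k p u" "p \<le> length u"
  shows "desc_asc_word k (set (take p u), set (drop p u)) = u"
    "card (set (take p u)) = p" "card (set (drop p u)) = length u - p"
proof -
  have u: "set u \<subset> {0..k}" "sorted_wrt (\<lambda>x y. I_less k (set u) y x) (take p u)"
    "sorted_wrt (I_less k (set u)) (drop p u)"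
    using assms desc_asc_at_iff_sorted by blast+
  have S: "set (take p u) \<union> set (drop p u) = set u"
    by (metis append_take_drop_id set_append)
  have "take p u = desc_word k (set u) (set (take p u))"
    by (rule desc_word_unique[OF u(2)]) (use S u(1) in auto)
  moreover have "drop p u = asc_word k (set u) (set (drop p u))"
    by (rule asc_word_unique[OF u(3)]) (use S u(1) in auto)
  ultimately show "desc_asc_word k (set (take p u), set (drop p u)) = u"
    using S by (metis append_take_drop_id desc_asc_word.simps)
  have "distinct (take p u)"
    using distinct_if_sorted_I_less[of k "set u" "rev (take p u)"] u(2) by (simp add: sorted_wrt_rev)
  then show "card (set (take p u)) = p"
    using assms(2) by (simp add: distinct_card)
  have "distinct (drop p u)"
    using distinct_if_sorted_I_less u(3) .
  then show "card (set (drop p u)) = length u - p"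
    by (simp add: distinct_card)
qed

lemma inj_on_desc_asc_word: "inj_on (desc_asc_word k) (card_subsets k p \<times> card_subsets k q)"
proof (rule inj_onI)
  fix AB AB' assume AB: "AB \<in> card_subsets k p \<times> card_subsets k q"
    and AB': "AB' \<in> card_subsets k p \<times> card_subsets k q"
    and eq: "desc_asc_word k AB = desc_asc_word k AB'"
  obtain A B A' B' where pairs: "AB = (A, B)" "AB' = (A', B')"
    by fastforce
  have fin: "finite A" "finite B" "finite A'" "finite B'" "card A = p" "card A' = p"
    using AB AB' pairs finite_subset_atLeastAtMost unfolding card_subsets_def by auto
  have "take p (desc_asc_word k AB) = desc_word k (A \<union> B) A"
    "drop p (desc_asc_word k AB) = asc_word k (A \<union> B) B"
    "take p (desc_asc_word k AB') = desc_word k (A' \<union> B') A'"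
    "drop p (desc_asc_word k AB') = asc_word k (A' \<union> B') B'"
    using fin pairs by (simp_all add: length_desc_word)
  then have "set (desc_word k (A \<union> B) A) = set (desc_word k (A' \<union> B') A')"
    "set (asc_word k (A \<union> B) B) = set (asc_word k (A' \<union> B') B')"
    using eq by metis+
  then show "AB = AB'"
    using fin pairs by (simp add: set_desc_word set_asc_word)
qed

lemma bij_betw_desc_asc_word:
  assumes "p \<le> r" "r \<le> k"
  shows "bij_betw (desc_asc_word k) (card_subsets k p \<times> card_subsets k (r - p))
    {u. length u = r \<and> desc_asc_at k p u}"
  unfolding bij_betw_def
proof (intro conjI inj_on_desc_asc_word equalityI subsetI)
  fix u assume "u \<in> desc_asc_word k ` (card_subsets k p \<times> card_subsets k (r - p))"
  then show "u \<in> {u. length u = r \<and> desc_asc_at k p u}"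
    using desc_asc_at_desc_asc_word assms unfolding card_subsets_def by auto
next
  fix u assume u: "u \<in> {u. length u = r \<and> desc_asc_at k p u}"
  then have "p \<le> length u" "set u \<subseteq> {0..k}"
    using assms(1) unfolding desc_asc_at_def by auto
  then have "(set (take p u), set (drop p u)) \<in> card_subsets k p \<times> card_subsets k (r - p)"
    using desc_asc_word_take_drop(2,3) u unfolding card_subsets_def
    by (auto dest: in_set_takeD in_set_dropD)
  moreover have "desc_asc_word k (set (take p u), set (drop p u)) = u"
    using desc_asc_word_take_drop(1) u \<open>p \<le> length u\<close> by blast
  ultimately show "u \<in> desc_asc_word k ` (card_subsets k p \<times> card_subsets k (r - p))"
    by (metis image_eqI)
qed

section \<open>The product \<open>h\<^sub>r\<^sub>-\<^sub>i e\<^sub>i\<close>\<close>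

lemma amul_h_sym_e_sym:
  "amul (h_sym k p) (e_sym k q) =
    (\<Sum>(A, B)\<in>card_subsets k p \<times> card_subsets k q. word (d_word k A @ rev (d_word k B)))"
proof -
  have "amul (h_sym k p) (e_sym k q) = (\<Sum>A\<in>card_subsets k p. amul (word (d_word k A)) (e_sym k q))"
    unfolding h_sym_def card_subsets_def by (rule amul_sum_left)
  also have "\<dots> =
      (\<Sum>A\<in>card_subsets k p. \<Sum>B\<in>card_subsets k q. word (d_word k A @ rev (d_word k B)))"
    unfolding e_sym_def card_subsets_def amul_sum_right amul_word ..
  also have "\<dots> = (\<Sum>(A, B)\<in>card_subsets k p \<times> card_subsets k q. word (d_word k A @ rev (d_word k B)))"
    by (rule sum.cartesian_product)
  finally show ?thesis .
qed

lemma A_eq_d_word_rev_d_word: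
  assumes "A \<subseteq> {0..k}" "B \<subseteq> {0..k}" "card A + card B \<le> k"
  shows "A_eq k (word (d_word k A @ rev (d_word k B))) (word (desc_asc_word k (A, B)))"
proof -
  have S: "A \<union> B \<subset> {0..k}"
    using Un_psubset_if_card_le[OF assms] .
  then have "set (d_word k A) = A" "set (rev (d_word k B)) = B"
    using set_d_word by auto
  then have "comm_steps k (d_word k A @ rev (d_word k B))
      (desc_word k (A \<union> B) A @ asc_word k (A \<union> B) B)"
    using comm_steps_d_word[OF _ S] comm_steps_rev_d_word[OF _ S] assms(1,2)
    by (intro comm_steps_append) auto
  then show ?thesis
    by (simp add: comm_steps_A_eq)
qed

lemma finite_Vset: "finite (Vset k r a)"
  by (rule finite_subset[of _ "{u. set u \<subseteq> {0..k} \<and> length u = r}"])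
    (auto simp: Vset_def hookV_def intro: finite_lists_length_eq)

lemma finite_Uset: "finite (Uset k r a)"
  by (rule finite_subset[of _ "{u. set u \<subseteq> {0..k} \<and> length u = r}"])
    (auto simp: Uset_def hookU_def intro: finite_lists_length_eq)

lemma wsum_hook_sets:
  "wsum (Vset k r a \<union> Vset k r (a - 1) \<union> Uset k r b) =
    wsum (Vset k r a) + wsum (Vset k r (a - 1)) + wsum (Uset k r b)"
proof -
  have "Vset k r a \<inter> Vset k r (a - 1) = {}"
    unfolding Vset_def by auto
  moreover have "(Vset k r a \<union> Vset k r (a - 1)) \<inter> Uset k r b = {}"
    using not_hookV_and_hookU unfolding Vset_def Uset_def by blast
  ultimately show ?thesis
    by (simp add: wsum_Un_disjoint finite_Vset finite_Uset)
qed

theorem lemma7p4: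
  fixes k i r :: nat
  assumes "i \<le> r" and "r \<le> k"
  shows "A_eq k (amul (h_sym k (r - i)) (e_sym k i))
           (wsum (Vset k r (int i)) + wsum (Vset k r (int i - 1)) + wsum (Uset k r (int i - 1)))"
proof -
  let ?P = "card_subsets k (r - i) \<times> card_subsets k i"
  have "A_eq k (amul (h_sym k (r - i)) (e_sym k i)) (\<Sum>AB\<in>?P. word (desc_asc_word k AB))"
    unfolding amul_h_sym_e_sym
  proof (rule A_eq_sum)
    fix AB assume "AB \<in> ?P"
    then obtain A B where "AB = (A, B)" "A \<subseteq> {0..k}" "B \<subseteq> {0..k}" "card A + card B \<le> k"
      using assms unfolding card_subsets_def by auto
    then show "A_eq k (case AB of (A, B) \<Rightarrow> word (d_word k A @ rev (d_word k B)))
        (word (desc_asc_word k AB))"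
      using A_eq_d_word_rev_d_word by simp
  qed
  also have "(\<Sum>AB\<in>?P. word (desc_asc_word k AB)) = wsum {u. length u = r \<and> desc_asc_at k (r - i) u}"
    using sum.reindex_bij_betw[OF bij_betw_desc_asc_word[of "r - i" r k]] assms
    unfolding wsum_def by simp
  also have "\<dots> = wsum (Vset k r (int i)) + wsum (Vset k r (int i - 1)) + wsum (Uset k r (int i - 1))"
    unfolding hook_sets_eq_desc_asc_at[OF assms(1), symmetric] by (rule wsum_hook_sets)
  finally show ?thesis .
qed

end
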